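(* Let $\alpha\in(0,1)$, $\theta_1,\ldots,\theta_{M_1}\in\Theta_1$, and let $\Phi^\ast$ and $\Delta^\ast_{M_1}$ be as defined below. Suppose that for every $\bar\Omega^\ast=(\omega_1^\ast,\ldots,\omega^\ast_{M_1})\in\Delta_{M_1}^\ast$ a least favorable distribution $\Lambda_{\bar\Omega^\ast}$ over $\Theta_0$ (for the alternative density $g_{\bar\Omega^\ast}=\sum_j\omega_j^\ast f_{\theta_j}$) exists and that the set \[ \Big\{y\in\mathcal Y:\ \sum_{j=1}^{M_1}\omega_j^\ast f_{\theta_j}(y)=\mathrm{cv}_{\bar\Omega^\ast}\int f_\theta(y)\,d\Lambda_{\bar\Omega^\ast}(\theta)\Big\} \] has $\nu$-measure zero. Then for every $\bar\Omega^\ast\in\Delta^\ast_{M_1}$, the Neyman–Pearson test $\varphi_{\Lambda_{\bar\Omega^\ast},\bar\Omega^\ast}$ is the $\nu$-a.e. unique maximizer over $\varphi\in\Phi_\alpha$ of $\sum_{j=1}^{M_1}\omega_j^\ast\int(\varphi-\varphi_{ah})f_{\theta_j}\,d\nu$. Furthermore, for any $\varphi_1^\ast,\varphi_2^\ast\in\Phi^\ast$ and any $\bar\Omega_1^\ast,\bar\Omega_2^\ast\in\Delta^\ast_{M_1}$, \[ \varphi_1^\ast=\varphi_2^\ast=\varphi_{\Lambda_{\bar\Omega_1^\ast},\bar\Omega_1^\ast}=\varphi_{\Lambda_{\bar\Omega_2^\ast},\bar\Omega_2^\ast}\quad\nu\text{-a.e.} \]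
   Context: A random element $Y$ takes values in a metric space $\mathcal Y$ (with its Borel $\sigma$-algebra) and has density $f_\theta$ with respect to a $\sigma$-finite measure $\nu$, where $\theta\in\Theta\subset\mathbb R^k$; $(\theta,y)\mapsto f_\theta(y)$ is assumed jointly measurable. $\Theta_0,\Theta_1\subset\Theta$ are disjoint Borel sets. A test is a measurable $\varphi:\mathcal Y\to[0,1]$; $\Phi$ is the set of all tests and $\Phi_\alpha=\{\varphi\in\Phi:\sup_{\theta\in\Theta_0}\int\varphi f_\theta\,d\nu\le\alpha\}$. $\varphi_{ah}\in\Phi_\alpha$ is a fixed given test. $\Delta_{M_1}$ is the unit simplex in $\mathbb R^{M_1}$. Define $\Phi^\ast=\arg\max_{\varphi\in\Phi_\alpha}\min_{j=1,\ldots,M_1}\int(\varphi-\varphi_{ah})f_{\theta_j}\,d\nu$ and $\Delta^\ast_{M_1}=\arg\min_{\bar\Omega\in\Delta_{M_1}}\sup_{\varphi\in\Phi_\alpha}\sum_{j}\omega_j\int(\varphi-\varphi_{ah})f_{\theta_j}\,d\nu$. For an alternative density $g$ and a probability distribution $\Lambda$ on $\Theta_0$, write $h_\Lambda=\int f_\theta\,d\Lambda(\theta)$ and let $\beta_\Lambda=\sup\{\int\varphi g\,d\nu:\varphi\in\Phi,\ \int\varphi h_\Lambda\,d\nu\le\alpha\}$. $\Lambda$ is a least favorable distribution (for $g$) if $\beta_\Lambda\le\beta_{\Lambda'}$ for every probability distribution $\Lambda'$ on $\Theta_0$. For $g=g_{\bar\Omega}=\sum_j\omega_jf_{\theta_j}$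 and such $\Lambda$, the Neyman–Pearson test $\varphi_{\Lambda,\bar\Omega}$ equals $1$ where $g>\mathrm{cv}_{\bar\Omega}h_\Lambda$, equals $\varkappa_{\bar\Omega}$ where $g=\mathrm{cv}_{\bar\Omega}h_\Lambda$, and $0$ where $g<\mathrm{cv}_{\bar\Omega}h_\Lambda$, with constants $\mathrm{cv}_{\bar\Omega}\ge0$, $\varkappa_{\bar\Omega}\in[0,1]$ chosen so that $\int\varphi_{\Lambda,\bar\Omega}h_\Lambda\,d\nu=\alpha$. *)

theory Defs
  imports "HOL-Probability.Probability"
begin

definition is_test :: "'y measure \<Rightarrow> ('y \<Rightarrow> real) \<Rightarrow> bool" where
  "is_test \<nu> \<phi> \<longleftrightarrow> \<phi> \<in> borel_measurable \<nu> \<and> (\<forall>y. 0 \<le> \<phi> y \<and> \<phi> y \<le> 1)"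

definition rej_prob :: "'y measure \<Rightarrow> ('y \<Rightarrow> real) \<Rightarrow> ('y \<Rightarrow> real) \<Rightarrow> real" where
  "rej_prob \<nu> \<phi> d = (LINT y|\<nu>. \<phi> y * d y)"

definition level_tests :: "'y measure \<Rightarrow> ('p \<Rightarrow> 'y \<Rightarrow> real) \<Rightarrow> 'p set \<Rightarrow> real \<Rightarrow> ('y \<Rightarrow> real) set" where
  "level_tests \<nu> f \<Theta>0 \<alpha> = {\<phi>. is_test \<nu> \<phi> \<and> (\<forall>\<theta>\<in>\<Theta>0. rej_prob \<nu> \<phi> (f \<theta>) \<le> \<alpha>)}"

text \<open>Unit simplex, indexed by a finite type 'm (with CARD('m) = M1).\<close>
definition weight_simplex :: "('m::finite \<Rightarrow> real) set" where
  "weight_simplex = {\<omega>. (\<forall>j. 0 \<le> \<omega> j) \<and> sum \<omega> UNIV = 1}"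

definition gain :: "'y measure \<Rightarrow> ('p \<Rightarrow> 'y \<Rightarrow> real) \<Rightarrow> ('y \<Rightarrow> real) \<Rightarrow> ('m \<Rightarrow> 'p)
    \<Rightarrow> ('y \<Rightarrow> real) \<Rightarrow> 'm \<Rightarrow> real" where
  "gain \<nu> f \<phi>ah \<theta>s \<phi> j = rej_prob \<nu> (\<lambda>y. \<phi> y - \<phi>ah y) (f (\<theta>s j))"

definition Phi_star :: "'y measure \<Rightarrow> ('p \<Rightarrow> 'y \<Rightarrow> real) \<Rightarrow> 'p set \<Rightarrow> real \<Rightarrow> ('y \<Rightarrow> real)
    \<Rightarrow> ('m::finite \<Rightarrow> 'p) \<Rightarrow> ('y \<Rightarrow> real) set" where
  "Phi_star \<nu> f \<Theta>0 \<alpha> \<phi>ah \<theta>s =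
     {\<phi> \<in> level_tests \<nu> f \<Theta>0 \<alpha>. \<forall>\<psi> \<in> level_tests \<nu> f \<Theta>0 \<alpha>.
        Min (range (gain \<nu> f \<phi>ah \<theta>s \<psi>)) \<le> Min (range (gain \<nu> f \<phi>ah \<theta>s \<phi>))}"

definition wobj :: "'y measure \<Rightarrow> ('p \<Rightarrow> 'y \<Rightarrow> real) \<Rightarrow> ('y \<Rightarrow> real) \<Rightarrow> ('m::finite \<Rightarrow> 'p)
    \<Rightarrow> ('m \<Rightarrow> real) \<Rightarrow> ('y \<Rightarrow> real) \<Rightarrow> real" where
  "wobj \<nu> f \<phi>ah \<theta>s \<omega> \<phi> = (\<Sum>j\<in>UNIV. \<omega> j * gain \<nu> f \<phi>ah \<theta>s \<phi> j)"

definition Delta_star :: "'y measure \<Rightarrow> ('p \<Rightarrow> 'y \<Rightarrow> real) \<Rightarrow> 'p set \<Rightarrow> real \<Rightarrow> ('y \<Rightarrow> real)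
    \<Rightarrow> ('m::finite \<Rightarrow> 'p) \<Rightarrow> ('m \<Rightarrow> real) set" where
  "Delta_star \<nu> f \<Theta>0 \<alpha> \<phi>ah \<theta>s =
     {\<omega> \<in> weight_simplex. \<forall>\<omega>' \<in> weight_simplex.
        (SUP \<phi>\<in>level_tests \<nu> f \<Theta>0 \<alpha>. wobj \<nu> f \<phi>ah \<theta>s \<omega> \<phi>)
          \<le> (SUP \<phi>\<in>level_tests \<nu> f \<Theta>0 \<alpha>. wobj \<nu> f \<phi>ah \<theta>s \<omega>' \<phi>)}"

definition prob_on :: "'p::topological_space set \<Rightarrow> 'p measure \<Rightarrow> bool" where
  "prob_on \<Theta>0 \<Lambda> \<longleftrightarrow> prob_space \<Lambda> \<and> sets \<Lambda> = sets borel \<and> emeasure \<Lambda> \<Theta>0 = 1"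

definition mixture :: "'p measure \<Rightarrow> ('p \<Rightarrow> 'y \<Rightarrow> real) \<Rightarrow> 'y \<Rightarrow> real" where
  "mixture \<Lambda> f y = (LINT \<theta>|\<Lambda>. f \<theta> y)"

definition beta :: "'y measure \<Rightarrow> real \<Rightarrow> ('y \<Rightarrow> real) \<Rightarrow> ('y \<Rightarrow> real) \<Rightarrow> real" where
  "beta \<nu> \<alpha> g h = Sup {rej_prob \<nu> \<phi> g | \<phi>. is_test \<nu> \<phi> \<and> rej_prob \<nu> \<phi> h \<le> \<alpha>}"

definition least_favorable :: "'y measure \<Rightarrow> ('p::topological_space \<Rightarrow> 'y \<Rightarrow> real) \<Rightarrow> 'p set
    \<Rightarrow> real \<Rightarrow> ('y \<Rightarrow> real) \<Rightarrow> 'p measure \<Rightarrow> bool" where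
  "least_favorable \<nu> f \<Theta>0 \<alpha> g \<Lambda> \<longleftrightarrow>
     prob_on \<Theta>0 \<Lambda> \<and>
     (\<forall>\<Lambda>'. prob_on \<Theta>0 \<Lambda>' \<longrightarrow> beta \<nu> \<alpha> g (mixture \<Lambda> f) \<le> beta \<nu> \<alpha> g (mixture \<Lambda>' f))"

definition mix_alt :: "('p \<Rightarrow> 'y \<Rightarrow> real) \<Rightarrow> ('m::finite \<Rightarrow> 'p) \<Rightarrow> ('m \<Rightarrow> real) \<Rightarrow> 'y \<Rightarrow> real" where
  "mix_alt f \<theta>s \<omega> y = (\<Sum>j\<in>UNIV. \<omega> j * f (\<theta>s j) y)"

definition np_test :: "('y \<Rightarrow> real) \<Rightarrow> ('y \<Rightarrow> real) \<Rightarrow> real \<Rightarrow> real \<Rightarrow> 'y \<Rightarrow> real" where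
  "np_test g h cv \<kappa> y = (if g y > cv * h y then 1 else if g y = cv * h y then \<kappa> else 0)"

end

theory Submission
  imports Defs
begin

text \<open>For fixed weights \<open>\<omega>\<close> the weighted objective is the power against the alternative
  \<open>g\<^sub>\<omega>\<close> minus a constant. Against the simple null \<open>h\<^sub>\<Lambda>\<close> the Neyman--Pearson test is most
  powerful, and a.e. unique since its boundary is null. It even has level \<open>\<alpha>\<close> for the whole
  composite null because \<open>\<Lambda>\<close> is least favorable: if it rejected some \<open>f\<^sub>\<theta>\<^sub>0\<close> too often,
  moving a little prior mass to \<open>\<theta>\<^sub>0\<close> would lower \<open>\<beta>\<close>. Finally, separating the convex set
  of gain vectors from the orthant above the maximin value shows that every maximin test also
  maximizes the weighted objective for every minimax weighting, so it equals the
  Neyman--Pearson test a.e.\<close>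

section \<open>Tests\<close>

lemma integrable_test_mult:
  assumes "is_test M \<phi>" "integrable M d"
  shows "integrable M (\<lambda>y. \<phi> y * d y)"
proof (rule Bochner_Integration.integrable_bound[OF integrable_abs[OF assms(2)]])
  show "(\<lambda>y. \<phi> y * d y) \<in> borel_measurable M"
    using assms by (auto simp: is_test_def)
  show "AE y in M. norm (\<phi> y * d y) \<le> norm \<bar>d y\<bar>"
    using assms(1) by (auto simp: is_test_def abs_mult intro!: mult_left_le_one_le)
qed

lemma rej_prob_nonneg:
  "is_test M \<phi> \<Longrightarrow> (\<And>y. 0 \<le> d y) \<Longrightarrow> 0 \<le> rej_prob M \<phi> d"
  unfolding rej_prob_def is_test_def by (auto intro: integral_nonneg_AE)

lemma rej_prob_le_integral:
  assumes "is_test M \<phi>" "integrable M d" "\<And>y. 0 \<le> d y"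
  shows "rej_prob M \<phi> d \<le> (LINT y|M. d y)"
  unfolding rej_prob_def using assms
  by (intro integral_mono integrable_test_mult) (auto simp: is_test_def intro: mult_left_le_one_le)

lemma rej_prob_diff:
  assumes "is_test M \<phi>" "is_test M \<psi>" "integrable M d"
  shows "rej_prob M (\<lambda>y. \<phi> y - \<psi> y) d = rej_prob M \<phi> d - rej_prob M \<psi> d"
  unfolding rej_prob_def using integrable_test_mult[OF assms(1,3)] integrable_test_mult[OF assms(2,3)]
  by (simp add: left_diff_distrib)

lemma rej_prob_convex_comb:
  assumes "is_test M \<phi>" "is_test M \<psi>" "integrable M d"
  shows "rej_prob M (\<lambda>y. u * \<phi> y + v * \<psi> y) d = u * rej_prob M \<phi> d + v * rej_prob M \<psi> d"
  unfolding rej_prob_def using integrable_test_mult[OF assms(1,3)] integrable_test_mult[OF assms(2,3)]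
  by (simp add: distrib_right mult.assoc)

lemma is_test_convex_comb:
  assumes "is_test M \<phi>" "is_test M \<psi>" "0 \<le> u" "0 \<le> v" "u + v = 1"
  shows "is_test M (\<lambda>y. u * \<phi> y + v * \<psi> y)"
  unfolding is_test_def
proof (intro conjI allI)
  show "(\<lambda>y. u * \<phi> y + v * \<psi> y) \<in> borel_measurable M"
    using assms(1,2) by (auto simp: is_test_def)
  fix y
  have "u * \<phi> y \<le> u" "v * \<psi> y \<le> v"
    using assms by (auto simp: is_test_def intro!: mult_right_le_one_le)
  then show "u * \<phi> y + v * \<psi> y \<le> 1" using assms(5) by linarith
  show "0 \<le> u * \<phi> y + v * \<psi> y" using assms by (auto simp: is_test_def)
qed

section \<open>Neyman--Pearson tests\<close>

lemma is_test_np_test: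
  assumes "g \<in> borel_measurable M" "h \<in> borel_measurable M" "0 \<le> \<kappa>" "\<kappa> \<le> 1"
  shows "is_test M (np_test g h c \<kappa>)"
  using assms unfolding is_test_def np_test_def by auto

lemma np_test_mult_margin: "np_test g h c \<kappa> y * (g y - c * h y) = max 0 (g y - c * h y)"
  by (auto simp: np_test_def)

lemma np_test_margin_nonneg:
  assumes "0 \<le> p" "p \<le> 1"
  shows "0 \<le> (np_test g h c \<kappa> y - p) * (g y - c * h y)"
  using assms by (auto simp: np_test_def intro: mult_nonneg_nonneg mult_nonpos_nonpos mult_nonneg_nonpos)

lemma np_test_AE_eq_indicator:
  assumes "AE y in M. g y \<noteq> c * h y"
  shows "AE y in M. np_test g h c \<kappa> y = (if 0 < g y - c * h y then 1 else 0)"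
  using assms by eventually_elim (auto simp: np_test_def)

lemma rej_prob_np_test_alt:
  assumes "integrable M g" "integrable M h" "0 \<le> \<kappa>" "\<kappa> \<le> 1"
  shows "rej_prob M (np_test g h c \<kappa>) g
    = (LINT y|M. max 0 (g y - c * h y)) + c * rej_prob M (np_test g h c \<kappa>) h"
proof -
  have test: "is_test M (np_test g h c \<kappa>)" using assms by (intro is_test_np_test) auto
  have "(\<lambda>y. np_test g h c \<kappa> y * g y)
      = (\<lambda>y. np_test g h c \<kappa> y * (g y - c * h y) + c * (np_test g h c \<kappa> y * h y))"
    by (auto simp: algebra_simps)
  then show ?thesis
    unfolding rej_prob_def
    using integrable_test_mult[OF test assms(1)] integrable_test_mult[OF test assms(2)] assms(1,2)
    by (simp add: np_test_mult_margin integrable_max)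
qed

lemma rej_prob_np_test_eq_indicator:
  assumes "AE y in M. g y \<noteq> c * h y"
    and [measurable]: "g \<in> borel_measurable M" "h \<in> borel_measurable M" "d \<in> borel_measurable M"
  shows "rej_prob M (np_test g h c \<kappa>) d = (LINT y|M. (if 0 < g y - c * h y then d y else 0))"
  unfolding rej_prob_def
proof (rule integral_cong_AE)
  show "AE y in M. np_test g h c \<kappa> y * d y = (if 0 < g y - c * h y then d y else 0)"
    using np_test_AE_eq_indicator[OF assms(1), of \<kappa>] by eventually_elim auto
qed (auto simp: np_test_def)

lemma rej_prob_gap_eq:
  assumes "is_test M \<phi>" "is_test M \<psi>" "integrable M g" "integrable M h"
  shows "rej_prob M \<phi> g - rej_prob M \<psi> g
    = (LINT y|M. (\<phi> y - \<psi> y) * (g y - c * h y)) + c * (rej_prob M \<phi> h - rej_prob M \<psi> h)"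
proof -
  have "(\<lambda>y. (\<phi> y - \<psi> y) * (g y - c * h y))
      = (\<lambda>y. (\<phi> y * g y - \<psi> y * g y) - c * (\<phi> y * h y - \<psi> y * h y))"
    by (auto simp: algebra_simps)
  then show ?thesis
    unfolding rej_prob_def using assms
    by (simp add: integrable_test_mult Bochner_Integration.integral_diff)
qed

lemma np_test_most_powerful:
  assumes g: "integrable M g" and h: "integrable M h" and c: "0 \<le> c" and \<kappa>: "0 \<le> \<kappa>" "\<kappa> \<le> 1"
    and size: "rej_prob M (np_test g h c \<kappa>) h = \<alpha>"
    and \<psi>: "is_test M \<psi>" "rej_prob M \<psi> h \<le> \<alpha>"
  shows "rej_prob M \<psi> g \<le> rej_prob M (np_test g h c \<kappa>) g"
proof -
  have "is_test M (np_test g h c \<kappa>)" using g h \<kappa> by (intro is_test_np_test) auto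
  moreover have "0 \<le> (LINT y|M. (np_test g h c \<kappa> y - \<psi> y) * (g y - c * h y))"
    using \<psi>(1) by (intro integral_nonneg_AE AE_I2 np_test_margin_nonneg) (auto simp: is_test_def)
  ultimately show ?thesis
    using rej_prob_gap_eq[OF _ \<psi>(1) g h, of "np_test g h c \<kappa>" c] size \<psi>(2) c
    by (smt (verit) mult_nonneg_nonneg)
qed

lemma np_test_unique_most_powerful:
  assumes g: "integrable M g" and h: "integrable M h" and c: "0 \<le> c" and \<kappa>: "0 \<le> \<kappa>" "\<kappa> \<le> 1"
    and size: "rej_prob M (np_test g h c \<kappa>) h = \<alpha>"
    and boundary: "AE y in M. g y \<noteq> c * h y"
    and \<psi>: "is_test M \<psi>" "rej_prob M \<psi> h \<le> \<alpha>"
    and eq: "rej_prob M \<psi> g = rej_prob M (np_test g h c \<kappa>) g"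
  shows "AE y in M. \<psi> y = np_test g h c \<kappa> y"
proof -
  define \<phi>0 where "\<phi>0 = np_test g h c \<kappa>"
  have \<phi>0: "is_test M \<phi>0" unfolding \<phi>0_def using g h \<kappa> by (intro is_test_np_test) auto
  have margin_nonneg: "0 \<le> (\<phi>0 y - \<psi> y) * (g y - c * h y)" for y
    unfolding \<phi>0_def using \<psi>(1) by (intro np_test_margin_nonneg) (auto simp: is_test_def)
  have margin_int: "integrable M (\<lambda>y. (\<phi>0 y - \<psi> y) * (g y - c * h y))"
    using integrable_test_mult[OF \<phi>0] integrable_test_mult[OF \<psi>(1)] g h
    by (simp add: left_diff_distrib)
  have "0 \<le> (LINT y|M. (\<phi>0 y - \<psi> y) * (g y - c * h y))"
    using margin_nonneg by (simp add: integral_nonneg)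
  then have "(LINT y|M. (\<phi>0 y - \<psi> y) * (g y - c * h y)) = 0"
    using rej_prob_gap_eq[OF \<phi>0 \<psi>(1) g h, of c] size \<psi>(2) c eq
    unfolding \<phi>0_def by (smt (verit) mult_nonneg_nonneg)
  then have "AE y in M. (\<phi>0 y - \<psi> y) * (g y - c * h y) = 0"
    using integral_nonneg_eq_0_iff_AE[OF margin_int] margin_nonneg by simp
  then show ?thesis
    using boundary by eventually_elim (simp add: \<phi>0_def)
qed

lemma rej_prob_le_beta:
  assumes "is_test M \<phi>" "rej_prob M \<phi> h \<le> \<alpha>" "integrable M g" "\<And>y. 0 \<le> g y"
  shows "rej_prob M \<phi> g \<le> beta M \<alpha> g h"
  unfolding beta_def
proof (rule cSup_upper)
  show "bdd_above {rej_prob M \<phi> g |\<phi>. is_test M \<phi> \<and> rej_prob M \<phi> h \<le> \<alpha>}"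
    using rej_prob_le_integral[OF _ assms(3,4)] by (auto intro!: bdd_aboveI[where M="LINT y|M. g y"])
qed (use assms in blast)

text \<open>Weak duality, with \<open>c\<close> as Lagrange multiplier of the size constraint.\<close>
lemma beta_le_lagrangian:
  assumes g: "integrable M g" and h: "integrable M h" and c: "0 \<le> c" and \<alpha>: "0 \<le> \<alpha>"
  shows "beta M \<alpha> g h \<le> (LINT y|M. max 0 (g y - c * h y)) + c * \<alpha>"
  unfolding beta_def
proof (rule cSup_least)
  show "{rej_prob M \<phi> g |\<phi>. is_test M \<phi> \<and> rej_prob M \<phi> h \<le> \<alpha>} \<noteq> {}"
    using \<alpha> by (auto simp: rej_prob_def is_test_def intro!: exI[of _ "\<lambda>y. 0"])
  fix x assume "x \<in> {rej_prob M \<phi> g |\<phi>. is_test M \<phi> \<and> rej_prob M \<phi> h \<le> \<alpha>}"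
  then obtain \<phi> where \<phi>: "is_test M \<phi>" "rej_prob M \<phi> h \<le> \<alpha>" and x: "x = rej_prob M \<phi> g"
    by blast
  have "rej_prob M \<phi> g = (LINT y|M. \<phi> y * (g y - c * h y)) + c * rej_prob M \<phi> h"
    unfolding rej_prob_def using integrable_test_mult[OF \<phi>(1) g] integrable_test_mult[OF \<phi>(1) h]
    by (simp add: right_diff_distrib mult.left_commute[of _ c])
  also have "\<dots> \<le> (LINT y|M. max 0 (g y - c * h y)) + c * \<alpha>"
  proof (intro add_mono integral_mono mult_left_mono)
    show "\<phi> y * (g y - c * h y) \<le> max 0 (g y - c * h y)" for y
      using \<phi>(1) by (cases "0 \<le> g y - c * h y")
        (auto simp: is_test_def intro: mult_left_le_one_le mult_nonneg_nonpos)
  qed (use \<phi> g h c in \<open>auto simp: integrable_max right_diff_distrib integrable_test_mult\<close>)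
  finally show "x \<le> (LINT y|M. max 0 (g y - c * h y)) + c * \<alpha>" using x by simp
qed

lemma beta_cong_AE:
  assumes "AE y in M. h1 y = h2 y" "h1 \<in> borel_measurable M" "h2 \<in> borel_measurable M"
  shows "beta M \<alpha> g h1 = beta M \<alpha> g h2"
proof -
  have "rej_prob M \<phi> h1 = rej_prob M \<phi> h2" if "is_test M \<phi>" for \<phi>
    unfolding rej_prob_def using assms that by (intro integral_cong_AE) (auto simp: is_test_def)
  then show ?thesis unfolding beta_def by metis
qed

section \<open>Minimax weights\<close>

lemma convex_simplex_weights_le:
  fixes S :: "(real^'m) set"
  assumes convex: "convex S" and nonempty: "S \<noteq> {}" and below: "\<forall>x\<in>S. \<exists>j. x $ j \<le> v"
  shows "\<exists>\<omega>\<in>weight_simplex. \<forall>x\<in>S. (\<Sum>j\<in>UNIV. \<omega> j * x $ j) \<le> v"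
proof -
  define T :: "(real^'m) set" where "T = (\<Inter>j. {x. inner (axis j 1) x > v})"
  have T_iff: "x \<in> T \<longleftrightarrow> (\<forall>j. v < x $ j)" for x by (simp add: T_def inner_axis')
  have inner_const: "inner a (\<chi> j. t) = t * (\<Sum>j\<in>UNIV. a $ j)" for a :: "real^'m" and t
    by (simp add: inner_vec_def sum_distrib_left mult.commute)
  define x1 :: "real^'m" where "x1 = (\<chi> j. v + 1)"
  have "x1 \<in> T" by (simp add: T_iff x1_def)
  moreover have "S \<inter> T = {}" using below by (auto simp: T_iff) (meson not_le)
  moreover have "convex T" unfolding T_def by (intro convex_INT convex_halfspace_gt)
  ultimately obtain a b where "a \<noteq> 0" and S_le: "\<forall>x\<in>S. inner a x \<le> b" and T_ge: "\<forall>x\<in>T. b \<le> inner a x"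
    using separating_hyperplane_sets[OF convex _ nonempty] by blast
  have a_nonneg: "0 \<le> a $ k" for k
  proof (rule ccontr)
    assume "\<not> 0 \<le> a $ k"
    define t where "t = (\<bar>b\<bar> + \<bar>inner a x1\<bar> + 1) / (- a $ k)"
    have "x1 + t *\<^sub>R axis k 1 \<in> T"
      using \<open>\<not> 0 \<le> a $ k\<close> by (auto simp: T_iff x1_def t_def axis_def)
    then have "b \<le> inner a x1 + t * a $ k"
      using T_ge by (auto simp: inner_add_right inner_axis)
    also have "\<dots> = inner a x1 - (\<bar>b\<bar> + \<bar>inner a x1\<bar> + 1)"
      using \<open>\<not> 0 \<le> a $ k\<close> by (simp add: t_def)
    finally show False by linarith
  qed
  define A where "A = (\<Sum>j\<in>UNIV. a $ j)"
  obtain k where "a $ k \<noteq> 0" using \<open>a \<noteq> 0\<close> by (metis vec_eq_iff zero_index)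
  then have "0 < A"
    unfolding A_def using a_nonneg by (intro sum_pos2[where i=k]) (auto simp: order_le_neq_trans)
  have b_le: "b \<le> v * A"
  proof (rule field_le_epsilon)
    fix e :: real assume "0 < e"
    then have "(\<chi> j. v + e / A) \<in> T" using \<open>0 < A\<close> by (simp add: T_iff)
    then have "b \<le> inner a (\<chi> j. v + e / A)" using T_ge by blast
    also have "\<dots> = v * A + e" using \<open>0 < A\<close> by (simp add: inner_const A_def algebra_simps)
    finally show "b \<le> v * A + e" .
  qed
  define \<omega> where "\<omega> j = a $ j / A" for j
  have "\<omega> \<in> weight_simplex"
    using a_nonneg \<open>0 < A\<close> by (auto simp: weight_simplex_def \<omega>_def A_def sum_divide_distrib[symmetric])
  moreover have "(\<Sum>j\<in>UNIV. \<omega> j * x $ j) \<le> v" if "x \<in> S" for x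
  proof -
    have "(\<Sum>j\<in>UNIV. a $ j * x $ j) \<le> v * A"
      using S_le that b_le by (auto simp: inner_vec_def)
    then show ?thesis
      using \<open>0 < A\<close> by (simp add: \<omega>_def sum_divide_distrib[symmetric] divide_le_eq)
  qed
  ultimately show ?thesis by blast
qed

lemma simplex_weighted_sum_ge_Min:
  fixes x :: "'m::finite \<Rightarrow> real"
  assumes "\<omega> \<in> weight_simplex"
  shows "Min (range x) \<le> (\<Sum>j\<in>UNIV. \<omega> j * x j)"
proof -
  have "Min (range x) = (\<Sum>j\<in>UNIV. \<omega> j * Min (range x))"
    using assms by (simp add: weight_simplex_def sum_distrib_right[symmetric])
  also have "\<dots> \<le> (\<Sum>j\<in>UNIV. \<omega> j * x j)"
    using assms by (intro sum_mono mult_left_mono) (auto simp: weight_simplex_def)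
  finally show ?thesis .
qed

lemma simplex_weighted_sum_le:
  fixes x :: "'m::finite \<Rightarrow> real"
  assumes "\<omega> \<in> weight_simplex" "\<And>j. x j \<le> B"
  shows "(\<Sum>j\<in>UNIV. \<omega> j * x j) \<le> B"
proof -
  have "(\<Sum>j\<in>UNIV. \<omega> j * x j) \<le> (\<Sum>j\<in>UNIV. \<omega> j * B)"
    using assms by (intro sum_mono mult_left_mono) (auto simp: weight_simplex_def)
  also have "\<dots> = B"
    using assms by (simp add: weight_simplex_def sum_distrib_right[symmetric])
  finally show ?thesis .
qed

text \<open>The separating weights \<open>\<omega>'\<close> show \<open>inf\<^sub>\<omega> sup\<^sub>\<phi> \<le> sup\<^sub>\<phi> min\<^sub>j\<close>, so for a minimizing \<open>\<omega>\<close>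
  the maximin point \<open>\<phi>1\<close> already attains \<open>sup\<^sub>\<phi>\<close>.\<close>
lemma maximin_maximizes_minimax_weighting:
  fixes G :: "'t \<Rightarrow> 'm::finite \<Rightarrow> real"
  assumes convex: "convex ((\<lambda>\<phi>. \<chi> j. G \<phi> j) ` P)"
    and bounded: "\<And>\<phi> j. \<phi> \<in> P \<Longrightarrow> G \<phi> j \<le> B"
    and maximin: "\<phi>1 \<in> P" "\<forall>\<psi>\<in>P. Min (range (G \<psi>)) \<le> Min (range (G \<phi>1))"
    and minimax: "\<omega> \<in> weight_simplex"
      "\<forall>\<omega>'\<in>weight_simplex. (SUP \<phi>\<in>P. \<Sum>j\<in>UNIV. \<omega> j * G \<phi> j) \<le> (SUP \<phi>\<in>P. \<Sum>j\<in>UNIV. \<omega>' j * G \<phi> j)"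
    and \<psi>: "\<psi> \<in> P"
  shows "(\<Sum>j\<in>UNIV. \<omega> j * G \<psi> j) \<le> (\<Sum>j\<in>UNIV. \<omega> j * G \<phi>1 j)"
proof -
  let ?v = "Min (range (G \<phi>1))"
  have "\<forall>x\<in>(\<lambda>\<phi>. \<chi> j. G \<phi> j) ` P. \<exists>j. x $ j \<le> ?v"
  proof
    fix x assume "x \<in> (\<lambda>\<phi>. \<chi> j. G \<phi> j) ` P"
    then obtain \<phi> where "\<phi> \<in> P" "x = (\<chi> j. G \<phi> j)" by blast
    moreover have "Min (range (G \<phi>)) \<in> range (G \<phi>)" by (rule Min_in) auto
    then obtain j where "G \<phi> j = Min (range (G \<phi>))" by (metis rangeE)
    ultimately show "\<exists>j. x $ j \<le> ?v" using maximin(2) by (metis vec_lambda_beta)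
  qed
  moreover have "(\<lambda>\<phi>. \<chi> j. G \<phi> j) ` P \<noteq> {}" using maximin(1) by blast
  ultimately obtain \<omega>' where \<omega>': "\<omega>' \<in> weight_simplex"
    and "\<forall>x\<in>(\<lambda>\<phi>. \<chi> j. G \<phi> j) ` P. (\<Sum>j\<in>UNIV. \<omega>' j * x $ j) \<le> ?v"
    using convex_simplex_weights_le[OF convex] by blast
  then have le_v: "\<forall>\<phi>\<in>P. (\<Sum>j\<in>UNIV. \<omega>' j * G \<phi> j) \<le> ?v" by simp
  have "(\<Sum>j\<in>UNIV. \<omega> j * G \<psi> j) \<le> (SUP \<phi>\<in>P. \<Sum>j\<in>UNIV. \<omega> j * G \<phi> j)"
    using \<psi> bounded minimax(1)
    by (intro cSUP_upper bdd_aboveI2[where M=B] simplex_weighted_sum_le) auto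
  also have "\<dots> \<le> (SUP \<phi>\<in>P. \<Sum>j\<in>UNIV. \<omega>' j * G \<phi> j)" using minimax(2) \<omega>' by blast
  also have "\<dots> \<le> ?v" using maximin(1) le_v by (intro cSUP_least) auto
  also have "\<dots> \<le> (\<Sum>j\<in>UNIV. \<omega> j * G \<phi>1 j)" by (rule simplex_weighted_sum_ge_Min[OF minimax(1)])
  finally show ?thesis .
qed

section \<open>Composite null hypotheses\<close>

lemma positive_part_perturbation_bound:
  fixes a c :: real
  shows "\<bar>max 0 (a - c) - max 0 a + (if 0 < a then c else 0)\<bar> \<le> \<bar>c\<bar>"
  by (auto simp: max_def abs_le_iff)

lemma positive_part_perturbation_eq:
  fixes a c :: real
  assumes "\<bar>c\<bar> < \<bar>a\<bar>"
  shows "max 0 (a - c) - max 0 a + (if 0 < a then c else 0) = 0"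
  using assms by (smt (verit))

text \<open>The right derivative of \<open>s \<mapsto> \<integral> max 0 (a - s b)\<close> at \<open>0\<close> is \<open>-\<integral>\<^sub>{\<^sub>a \<^sub>> \<^sub>0\<^sub>} b\<close>: the
  difference quotients are dominated by \<open>\<bar>b\<bar>\<close> and vanish eventually wherever \<open>a \<noteq> 0\<close>.\<close>
lemma integral_positive_part_decrease:
  fixes a b :: "'a \<Rightarrow> real"
  assumes a: "integrable M a" and b: "integrable M b" and a_nz: "AE y in M. a y \<noteq> 0"
    and d: "d < (LINT y|M. (if 0 < a y then b y else 0))"
  shows "\<exists>s>0. (LINT y|M. max 0 (a y - s * b y)) + s * d < (LINT y|M. max 0 (a y))"
proof -
  define s :: "nat \<Rightarrow> real" where "s n = 1 / Suc n" for n
  have s_pos: "0 < s n" for n by (simp add: s_def)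
  have s_lim: "s \<longlonglongrightarrow> 0" unfolding s_def by (rule LIMSEQ_Suc[OF lim_const_over_n])
  define I where "I = (LINT y|M. (if 0 < a y then b y else 0))"
  define R where "R n y = (max 0 (a y - s n * b y) - max 0 (a y) + (if 0 < a y then s n * b y else 0)) / s n"
    for n y
  have [measurable]: "a \<in> borel_measurable M" "b \<in> borel_measurable M" using a b by auto
  have int_R: "(LINT y|M. R n y)
      = ((LINT y|M. max 0 (a y - s n * b y)) - (LINT y|M. max 0 (a y)) + s n * I) / s n" for n
  proof -
    have "(LINT y|M. (if 0 < a y then s n * b y else 0)) = (LINT y|M. s n * (if 0 < a y then b y else 0))"
      by (rule Bochner_Integration.integral_cong) auto
    then have "(LINT y|M. (if 0 < a y then s n * b y else 0)) = s n * I"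
      by (simp add: I_def)
    moreover have "integrable M (\<lambda>y. if 0 < a y then s n * b y else 0)"
      by (rule Bochner_Integration.integrable_bound[OF integrable_abs[OF integrable_mult_right[OF b]]]) auto
    ultimately show ?thesis
      unfolding R_def using a b
      by (simp add: integrable_max Bochner_Integration.integral_diff Bochner_Integration.integral_add)
  qed
  have "(\<lambda>n. LINT y|M. R n y) \<longlonglongrightarrow> (LINT y|M. 0)"
  proof (rule integral_dominated_convergence[where w="\<lambda>y. \<bar>b y\<bar>"])
    show "AE y in M. norm (R n y) \<le> \<bar>b y\<bar>" for n
    proof (intro AE_I2)
      fix y
      have "\<bar>R n y\<bar> * s n \<le> \<bar>s n * b y\<bar>"
        using positive_part_perturbation_bound[of "a y" "s n * b y"] s_pos[of n]
        by (simp add: R_def abs_divide)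
      then show "norm (R n y) \<le> \<bar>b y\<bar>"
        using s_pos[of n] by (simp add: abs_mult)
    qed
    show "AE y in M. (\<lambda>n. R n y) \<longlonglongrightarrow> 0"
      using a_nz
    proof eventually_elim
      case (elim y)
      have "(\<lambda>n. \<bar>s n * b y\<bar>) \<longlonglongrightarrow> 0"
        by (intro tendsto_rabs_zero tendsto_mult_left_zero s_lim)
      then have "\<forall>\<^sub>F n in sequentially. \<bar>s n * b y\<bar> < \<bar>a y\<bar>"
        using elim by (intro order_tendstoD(2)) auto
      then have "\<forall>\<^sub>F n in sequentially. R n y = 0"
        by eventually_elim (simp add: R_def positive_part_perturbation_eq)
      then show ?case by (rule tendsto_eventually)
    qed
  qed (use b in \<open>auto simp: R_def\<close>)
  then have "\<forall>\<^sub>F n in sequentially. (LINT y|M. R n y) < I - d"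
    using d by (intro order_tendstoD(2)) (auto simp: I_def)
  then obtain n where "(LINT y|M. R n y) < I - d"
    by (auto dest: eventually_happens)
  then have "(LINT y|M. max 0 (a y - s n * b y)) - (LINT y|M. max 0 (a y)) + s n * I < s n * (I - d)"
    using s_pos[of n] by (simp add: int_R divide_less_eq mult.commute)
  then have "(LINT y|M. max 0 (a y - s n * b y)) + s n * d < (LINT y|M. max 0 (a y))"
    by (simp add: algebra_simps)
  then show ?thesis using s_pos by blast
qed

text \<open>The prior \<open>t \<delta>\<^sub>\<theta>\<^sub>0 + (1 - t) \<Lambda>\<close>.\<close>
definition contamination :: "'p::topological_space measure \<Rightarrow> 'p \<Rightarrow> real \<Rightarrow> 'p measure" where
  "contamination \<Lambda> \<theta>0 t =
     measure_pmf (bernoulli_pmf t) \<bind> (\<lambda>b. if b then return borel \<theta>0 else \<Lambda>)"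

locale density_family =
  fixes \<nu> :: "'y::topological_space measure"
    and f :: "'p::topological_space \<Rightarrow> 'y \<Rightarrow> real"
    and \<Theta> \<Theta>0 :: "'p set"
  assumes sets_nu: "sets \<nu> = sets borel"
    and sigma_finite: "sigma_finite_measure \<nu>"
    and f_meas: "(\<lambda>(\<theta>, y). f \<theta> y) \<in> borel_measurable (borel \<Otimes>\<^sub>M borel)"
    and f_dens: "\<forall>\<theta>\<in>\<Theta>. (\<forall>y. 0 \<le> f \<theta> y) \<and> integrable \<nu> (f \<theta>) \<and> (LINT y|\<nu>. f \<theta> y) = 1"
    and Theta0_subset: "\<Theta>0 \<subseteq> \<Theta>"
    and Theta0_borel: "\<Theta>0 \<in> sets borel"
begin

lemma borel_measurable_nu: "borel_measurable \<nu> = borel_measurable borel"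
  by (rule measurable_cong_sets[OF sets_nu refl])

lemma f_measurable_\<theta>: "(\<lambda>\<theta>. f \<theta> y) \<in> borel_measurable borel"
  using measurable_Pair1[OF f_meas, of y] by simp

lemma f_nonneg: "\<theta> \<in> \<Theta> \<Longrightarrow> 0 \<le> f \<theta> y"
  and f_integrable: "\<theta> \<in> \<Theta> \<Longrightarrow> integrable \<nu> (f \<theta>)"
  and f_integral: "\<theta> \<in> \<Theta> \<Longrightarrow> (LINT y|\<nu>. f \<theta> y) = 1"
  using f_dens by auto

lemma rej_prob_le_1: "\<theta> \<in> \<Theta> \<Longrightarrow> is_test \<nu> \<phi> \<Longrightarrow> rej_prob \<nu> \<phi> (f \<theta>) \<le> 1"
  using rej_prob_le_integral[of \<nu> \<phi> "f \<theta>"] by (simp add: f_integrable f_nonneg f_integral)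

text \<open>\<open>mixture\<close> is a Bochner integral, hence \<open>0\<close> wherever this integral is infinite; Tonelli
  applies to the latter, which is shown to be finite almost everywhere.\<close>
definition nn_mixture :: "'p measure \<Rightarrow> 'y \<Rightarrow> ennreal" where
  "nn_mixture \<Lambda> y = (\<integral>\<^sup>+\<theta>. ennreal (f \<theta> y) \<partial>\<Lambda>)"

context
  fixes \<Lambda> :: "'p measure"
  assumes \<Lambda>: "prob_on \<Theta>0 \<Lambda>"
begin

interpretation \<Lambda>: prob_space \<Lambda> using \<Lambda> by (simp add: prob_on_def)

lemma sets_\<Lambda>: "sets \<Lambda> = sets borel" using \<Lambda> by (simp add: prob_on_def)

lemma AE_\<Lambda>_Theta0: "AE \<theta> in \<Lambda>. \<theta> \<in> \<Theta>0"
  using \<Lambda> Theta0_borel \<Lambda>.AE_in_set_eq_1[of \<Theta>0]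
  by (simp add: prob_on_def sets_\<Lambda> \<Lambda>.emeasure_eq_measure)

lemma f_measurable_\<Lambda>: "(\<lambda>\<theta>. f \<theta> y) \<in> borel_measurable \<Lambda>"
  using f_measurable_\<theta> measurable_cong_sets[OF sets_\<Lambda> refl] by blast

lemma mixture_eq_nn_mixture: "mixture \<Lambda> f y = enn2real (nn_mixture \<Lambda> y)"
  unfolding mixture_def nn_mixture_def
  by (rule integral_eq_nn_integral[OF f_measurable_\<Lambda>])
     (use AE_\<Lambda>_Theta0 Theta0_subset f_nonneg in \<open>auto elim!: AE_mp\<close>)

lemma mixture_nonneg: "0 \<le> mixture \<Lambda> f y"
  by (simp add: mixture_eq_nn_mixture)

lemma nn_mixture_measurable: "nn_mixture \<Lambda> \<in> borel_measurable \<nu>"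
proof -
  have "(\<lambda>(y, \<theta>). f \<theta> y) \<in> borel_measurable (borel \<Otimes>\<^sub>M borel)"
    using measurable_compose[OF measurable_pair_swap' f_meas] by (simp add: case_prod_beta)
  then have "(\<lambda>(y, \<theta>). ennreal (f \<theta> y)) \<in> borel_measurable (\<nu> \<Otimes>\<^sub>M \<Lambda>)"
    by (subst measurable_cong_sets[OF sets_pair_measure_cong[OF sets_nu sets_\<Lambda>] refl])
       (auto simp: case_prod_beta')
  from \<Lambda>.borel_measurable_nn_integral[OF this] show ?thesis
    unfolding nn_mixture_def by (simp add: case_prod_beta')
qed

lemma nn_integral_test_nn_mixture:
  assumes \<psi>: "is_test \<nu> \<psi>"
  shows "(\<integral>\<^sup>+y. ennreal (\<psi> y) * nn_mixture \<Lambda> y \<partial>\<nu>) = (\<integral>\<^sup>+\<theta>. ennreal (rej_prob \<nu> \<psi> (f \<theta>)) \<partial>\<Lambda>)"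
proof -
  interpret pair_sigma_finite \<Lambda> \<nu>
    using sigma_finite \<Lambda>.sigma_finite_measure_axioms by (simp add: pair_sigma_finite_def)
  have [measurable]: "\<psi> \<in> borel_measurable borel"
    using \<psi> by (simp add: is_test_def borel_measurable_nu)
  have "(\<lambda>(\<theta>, y). ennreal (\<psi> y * f \<theta> y)) \<in> borel_measurable (borel \<Otimes>\<^sub>M borel)"
    using f_meas by (auto simp: case_prod_beta')
  then have meas: "(\<lambda>(\<theta>, y). ennreal (\<psi> y * f \<theta> y)) \<in> borel_measurable (\<Lambda> \<Otimes>\<^sub>M \<nu>)"
    by (subst measurable_cong_sets[OF sets_pair_measure_cong[OF sets_\<Lambda> sets_nu] refl])
  have "(\<integral>\<^sup>+y. ennreal (\<psi> y) * nn_mixture \<Lambda> y \<partial>\<nu>) = (\<integral>\<^sup>+y. (\<integral>\<^sup>+\<theta>. ennreal (\<psi> y * f \<theta> y) \<partial>\<Lambda>) \<partial>\<nu>)"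
    unfolding nn_mixture_def using \<psi> f_measurable_\<Lambda>
    by (intro nn_integral_cong) (auto simp: is_test_def ennreal_mult' nn_integral_cmult[symmetric])
  also have "\<dots> = (\<integral>\<^sup>+\<theta>. (\<integral>\<^sup>+y. ennreal (\<psi> y * f \<theta> y) \<partial>\<nu>) \<partial>\<Lambda>)"
    using meas by (rule Fubini')
  also have "\<dots> = (\<integral>\<^sup>+\<theta>. ennreal (rej_prob \<nu> \<psi> (f \<theta>)) \<partial>\<Lambda>)"
  proof (intro nn_integral_cong_AE, use AE_\<Lambda>_Theta0 in eventually_elim)
    case (elim \<theta>)
    then have "\<theta> \<in> \<Theta>" using Theta0_subset by auto
    then show ?case
      unfolding rej_prob_def using \<psi>
      by (intro nn_integral_eq_integral integrable_test_mult f_integrable)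
         (auto simp: is_test_def f_nonneg)
  qed
  finally show ?thesis .
qed

lemma nn_integral_nn_mixture: "(\<integral>\<^sup>+y. nn_mixture \<Lambda> y \<partial>\<nu>) = 1"
proof -
  have "is_test \<nu> (\<lambda>y. 1)" by (simp add: is_test_def)
  then have "(\<integral>\<^sup>+y. nn_mixture \<Lambda> y \<partial>\<nu>) = (\<integral>\<^sup>+\<theta>. ennreal (rej_prob \<nu> (\<lambda>y. 1) (f \<theta>)) \<partial>\<Lambda>)"
    using nn_integral_test_nn_mixture[of "\<lambda>y. 1"] by simp
  also have "\<dots> = (\<integral>\<^sup>+\<theta>. 1 \<partial>\<Lambda>)"
    using Theta0_subset
    by (intro nn_integral_cong_AE eventually_mono[OF AE_\<Lambda>_Theta0]) (auto simp: rej_prob_def f_integral)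
  finally show ?thesis by (simp add: \<Lambda>.emeasure_space_1)
qed

lemma nn_mixture_AE_eq: "AE y in \<nu>. nn_mixture \<Lambda> y = ennreal (mixture \<Lambda> f y)"
proof -
  have "AE y in \<nu>. nn_mixture \<Lambda> y \<noteq> \<infinity>"
    by (intro nn_integral_PInf_AE nn_mixture_measurable) (simp add: nn_integral_nn_mixture)
  then show ?thesis
    by eventually_elim (simp add: mixture_eq_nn_mixture less_top)
qed

lemma mixture_measurable: "mixture \<Lambda> f \<in> borel_measurable \<nu>"
  using nn_mixture_measurable by (simp add: mixture_eq_nn_mixture[abs_def])

lemma mixture_integrable: "integrable \<nu> (mixture \<Lambda> f)"
proof (rule integrableI_nonneg[OF mixture_measurable])
  have "(\<integral>\<^sup>+y. ennreal (mixture \<Lambda> f y) \<partial>\<nu>) = (\<integral>\<^sup>+y. nn_mixture \<Lambda> y \<partial>\<nu>)"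
    using nn_mixture_AE_eq by (intro nn_integral_cong_AE) auto
  then show "(\<integral>\<^sup>+y. ennreal (mixture \<Lambda> f y) \<partial>\<nu>) < \<infinity>"
    by (simp add: nn_integral_nn_mixture)
qed (simp add: mixture_nonneg)

lemma rej_prob_mixture:
  assumes \<psi>: "is_test \<nu> \<psi>"
  shows "rej_prob \<nu> \<psi> (mixture \<Lambda> f) = enn2real (\<integral>\<^sup>+\<theta>. ennreal (rej_prob \<nu> \<psi> (f \<theta>)) \<partial>\<Lambda>)"
proof -
  have "rej_prob \<nu> \<psi> (mixture \<Lambda> f) = enn2real (\<integral>\<^sup>+y. ennreal (\<psi> y * mixture \<Lambda> f y) \<partial>\<nu>)"
    unfolding rej_prob_def using \<psi> mixture_measurable
    by (intro integral_eq_nn_integral) (auto simp: is_test_def mixture_nonneg)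
  also have "(\<integral>\<^sup>+y. ennreal (\<psi> y * mixture \<Lambda> f y) \<partial>\<nu>) = (\<integral>\<^sup>+y. ennreal (\<psi> y) * nn_mixture \<Lambda> y \<partial>\<nu>)"
    using nn_mixture_AE_eq \<psi>
    by (intro nn_integral_cong_AE) (auto simp: is_test_def ennreal_mult' elim!: AE_mp)
  finally show ?thesis by (simp add: nn_integral_test_nn_mixture[OF \<psi>])
qed

lemma rej_prob_mixture_le:
  assumes \<psi>: "is_test \<nu> \<psi>" and level: "\<forall>\<theta>\<in>\<Theta>0. rej_prob \<nu> \<psi> (f \<theta>) \<le> \<alpha>" and \<alpha>: "0 \<le> \<alpha>"
  shows "rej_prob \<nu> \<psi> (mixture \<Lambda> f) \<le> \<alpha>"
proof -
  have "(\<integral>\<^sup>+\<theta>. ennreal (rej_prob \<nu> \<psi> (f \<theta>)) \<partial>\<Lambda>) \<le> (\<integral>\<^sup>+\<theta>. ennreal \<alpha> \<partial>\<Lambda>)"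
    using AE_\<Lambda>_Theta0 level by (intro nn_integral_mono_AE) (auto simp: ennreal_leI elim!: AE_mp)
  then show ?thesis
    using \<alpha> by (simp add: rej_prob_mixture[OF \<psi>] \<Lambda>.emeasure_space_1 enn2real_leI)
qed

end

lemma prob_on_contamination:
  assumes \<Lambda>: "prob_on \<Theta>0 \<Lambda>" and \<theta>0: "\<theta>0 \<in> \<Theta>0" and t: "0 \<le> t" "t \<le> 1"
  shows "prob_on \<Theta>0 (contamination \<Lambda> \<theta>0 t)"
proof -
  have pmf: "measure_pmf (bernoulli_pmf t) \<in> space (prob_algebra (count_space UNIV))"
    by (simp add: space_prob_algebra measure_pmf.prob_space_axioms)
  have kernel: "(\<lambda>b. if b then return borel \<theta>0 else \<Lambda>) \<in> count_space UNIV \<rightarrow>\<^sub>M prob_algebra borel"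
    using \<Lambda> by (auto simp: space_prob_algebra prob_space_return prob_on_def)
  have "emeasure (contamination \<Lambda> \<theta>0 t) \<Theta>0
      = (\<integral>\<^sup>+b. emeasure (if b then return borel \<theta>0 else \<Lambda>) \<Theta>0 \<partial>measure_pmf (bernoulli_pmf t))"
    unfolding contamination_def by (rule emeasure_bind_prob_algebra[OF pmf kernel Theta0_borel])
  also have "\<dots> = 1"
    using t \<theta>0 \<Lambda> Theta0_borel
    by (simp add: prob_on_def ennreal_plus[symmetric] del: ennreal_plus)
  finally show ?thesis
    unfolding prob_on_def contamination_def
    using prob_space_bind'[OF pmf kernel] sets_bind'[OF pmf kernel] by (simp add: contamination_def)
qed

lemma mixture_contamination:
  assumes \<Lambda>: "prob_on \<Theta>0 \<Lambda>" and \<theta>0: "\<theta>0 \<in> \<Theta>0" and t: "0 \<le> t" "t \<le> 1"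
  shows "AE y in \<nu>. mixture (contamination \<Lambda> \<theta>0 t) f y = t * f \<theta>0 y + (1 - t) * mixture \<Lambda> f y"
  using nn_mixture_AE_eq[OF \<Lambda>]
proof eventually_elim
  case (elim y)
  have kernel: "(\<lambda>b. if b then return borel \<theta>0 else \<Lambda>)
      \<in> measure_pmf (bernoulli_pmf t) \<rightarrow>\<^sub>M subprob_algebra borel"
    using \<Lambda> by (auto simp: space_subprob_algebra prob_space_return prob_on_def prob_space_imp_subprob_space)
  have "nn_mixture (contamination \<Lambda> \<theta>0 t) y
      = (\<integral>\<^sup>+b. (\<integral>\<^sup>+\<theta>. ennreal (f \<theta> y) \<partial>(if b then return borel \<theta>0 else \<Lambda>)) \<partial>measure_pmf (bernoulli_pmf t))"
    unfolding nn_mixture_def contamination_def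
    by (rule nn_integral_bind[OF _ kernel]) (use f_measurable_\<theta> in measurable)
  also have "\<dots> = ennreal t * ennreal (f \<theta>0 y) + ennreal (1 - t) * nn_mixture \<Lambda> y"
    using t f_measurable_\<theta> by (simp add: nn_mixture_def nn_integral_return mult.commute)
  finally show ?case
    using t elim \<theta>0 Theta0_subset f_nonneg[of \<theta>0 y] mixture_nonneg[OF \<Lambda>, of y]
    unfolding mixture_eq_nn_mixture[OF prob_on_contamination[OF \<Lambda> \<theta>0 t]]
    by (simp add: ennreal_mult'[symmetric] ennreal_plus[symmetric] subsetD del: ennreal_plus)
qed

text \<open>If the Neyman--Pearson test against a least favorable mixture rejected some null
  \<open>f \<theta>0\<close> with probability above \<open>\<alpha>\<close>, shifting prior mass \<open>s/(c + s)\<close> to \<open>\<theta>0\<close> and raising the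
  multiplier to \<open>c + s\<close> would, for small \<open>s\<close>, push the Lagrangian bound on the power strictly
  below the power of the test itself.\<close>
lemma np_test_level_if_least_favorable:
  assumes g: "integrable \<nu> g" "\<And>y. 0 \<le> g y"
    and LF: "least_favorable \<nu> f \<Theta>0 \<alpha> g \<Lambda>"
    and c: "0 \<le> c" and \<kappa>: "0 \<le> \<kappa>" "\<kappa> \<le> 1" and \<alpha>: "0 \<le> \<alpha>"
    and size: "rej_prob \<nu> (np_test g (mixture \<Lambda> f) c \<kappa>) (mixture \<Lambda> f) = \<alpha>"
    and boundary: "AE y in \<nu>. g y \<noteq> c * mixture \<Lambda> f y"
    and \<theta>0: "\<theta>0 \<in> \<Theta>0"
  shows "rej_prob \<nu> (np_test g (mixture \<Lambda> f) c \<kappa>) (f \<theta>0) \<le> \<alpha>"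
proof (rule ccontr)
  assume exceeds: "\<not> ?thesis"
  define h where "h = mixture \<Lambda> f"
  define \<phi>0 where "\<phi>0 = np_test g h c \<kappa>"
  define a where "a y = g y - c * h y" for y
  have \<Lambda>: "prob_on \<Theta>0 \<Lambda>" using LF by (simp add: least_favorable_def)
  have h: "integrable \<nu> h" unfolding h_def by (rule mixture_integrable[OF \<Lambda>])
  have f\<theta>0: "integrable \<nu> (f \<theta>0)" using \<theta>0 Theta0_subset f_integrable by auto
  have "\<alpha> < (LINT y|\<nu>. (if 0 < a y then f \<theta>0 y else 0))"
    using exceeds rej_prob_np_test_eq_indicator[OF boundary] g(1) h f\<theta>0
    by (simp add: a_def h_def)
  moreover have "integrable \<nu> a" unfolding a_def using g(1) h by auto
  moreover have "AE y in \<nu>. a y \<noteq> 0" using boundary by (simp add: a_def h_def)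
  ultimately obtain s where "0 < s"
    and decrease: "(LINT y|\<nu>. max 0 (a y - s * f \<theta>0 y)) + s * \<alpha> < (LINT y|\<nu>. max 0 (a y))"
    using integral_positive_part_decrease[of \<nu> a "f \<theta>0"] f\<theta>0 by blast
  define t where "t = s / (c + s)"
  have "0 < c + s" using \<open>0 < s\<close> c by simp
  then have t: "0 \<le> t" "t \<le> 1" using c \<open>0 < s\<close> by (auto simp: t_def)
  define h' where "h' y = t * f \<theta>0 y + (1 - t) * h y" for y
  have h': "integrable \<nu> h'" unfolding h'_def using f\<theta>0 h by auto
  have scaled_h': "(c + s) * h' y = s * f \<theta>0 y + c * h y" for y
  proof -
    have "1 - t = c / (c + s)" using \<open>0 < c + s\<close> by (simp add: t_def field_simps)
    then show ?thesis using \<open>0 < c + s\<close> by (simp add: h'_def t_def distrib_left)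
  qed
  let ?\<Lambda>' = "contamination \<Lambda> \<theta>0 t"
  have "rej_prob \<nu> \<phi>0 g \<le> beta \<nu> \<alpha> g h"
    using rej_prob_le_beta[of \<nu> \<phi>0 h \<alpha> g] g h size \<kappa>
    by (simp add: \<phi>0_def h_def is_test_np_test)
  also have "\<dots> \<le> beta \<nu> \<alpha> g (mixture ?\<Lambda>' f)"
    using LF prob_on_contamination[OF \<Lambda> \<theta>0 t] by (simp add: least_favorable_def h_def)
  also have "\<dots> = beta \<nu> \<alpha> g h'"
    using mixture_contamination[OF \<Lambda> \<theta>0 t] mixture_measurable[OF prob_on_contamination[OF \<Lambda> \<theta>0 t]] h'
    by (intro beta_cong_AE) (auto simp: h'_def h_def)
  also have "\<dots> \<le> (LINT y|\<nu>. max 0 (g y - (c + s) * h' y)) + (c + s) * \<alpha>"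
    using g(1) h' c \<open>0 < s\<close> \<alpha> by (intro beta_le_lagrangian) auto
  also have "\<dots> = (LINT y|\<nu>. max 0 (a y - s * f \<theta>0 y)) + s * \<alpha> + c * \<alpha>"
    unfolding scaled_h' a_def by (simp add: algebra_simps)
  also have "\<dots> < (LINT y|\<nu>. max 0 (a y)) + c * \<alpha>"
    using decrease by simp
  also have "\<dots> = rej_prob \<nu> \<phi>0 g"
    using rej_prob_np_test_alt[OF g(1) h \<kappa>, of c] size by (simp add: \<phi>0_def a_def h_def)
  finally show False by simp
qed

lemma AE_neq_if_null:
  fixes g h :: "'y \<Rightarrow> real"
  assumes "emeasure \<nu> {y. g y = c * h y} = 0"
    and [measurable]: "g \<in> borel_measurable \<nu>" "h \<in> borel_measurable \<nu>"
  shows "AE y in \<nu>. g y \<noteq> c * h y"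
proof (rule AE_I')
  have "{y. g y = c * h y} = {y \<in> space \<nu>. g y = c * h y}"
    using sets_eq_imp_space_eq[OF sets_nu] by simp
  also have "\<dots> \<in> sets \<nu>" by measurable
  finally show "{y. g y = c * h y} \<in> null_sets \<nu>" using assms(1) by (simp add: null_sets_def)
qed auto

lemma np_test_optimal_if_least_favorable:
  assumes g: "integrable \<nu> g" "\<And>y. 0 \<le> g y"
    and LF: "least_favorable \<nu> f \<Theta>0 \<alpha> g \<Lambda>"
    and c: "0 \<le> c" and \<kappa>: "0 \<le> \<kappa>" "\<kappa> \<le> 1" and \<alpha>: "0 \<le> \<alpha>"
    and size: "rej_prob \<nu> (np_test g (mixture \<Lambda> f) c \<kappa>) (mixture \<Lambda> f) = \<alpha>"
    and boundary: "emeasure \<nu> {y. g y = c * mixture \<Lambda> f y} = 0"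
  defines "\<phi>0 \<equiv> np_test g (mixture \<Lambda> f) c \<kappa>"
  shows "\<phi>0 \<in> level_tests \<nu> f \<Theta>0 \<alpha>"
    and "\<psi> \<in> level_tests \<nu> f \<Theta>0 \<alpha> \<Longrightarrow> rej_prob \<nu> \<psi> g \<le> rej_prob \<nu> \<phi>0 g"
    and "\<psi> \<in> level_tests \<nu> f \<Theta>0 \<alpha> \<Longrightarrow> rej_prob \<nu> \<psi> g = rej_prob \<nu> \<phi>0 g \<Longrightarrow> AE y in \<nu>. \<psi> y = \<phi>0 y"
proof -
  have \<Lambda>: "prob_on \<Theta>0 \<Lambda>" using LF by (simp add: least_favorable_def)
  have h: "integrable \<nu> (mixture \<Lambda> f)" by (rule mixture_integrable[OF \<Lambda>])
  have AE_boundary: "AE y in \<nu>. g y \<noteq> c * mixture \<Lambda> f y"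
    using boundary g(1) h by (intro AE_neq_if_null) auto
  show "\<phi>0 \<in> level_tests \<nu> f \<Theta>0 \<alpha>"
    unfolding level_tests_def \<phi>0_def
    using np_test_level_if_least_favorable[OF g LF c \<kappa> \<alpha> size AE_boundary] g(1) h \<kappa>
    by (auto intro: is_test_np_test)
  assume \<psi>: "\<psi> \<in> level_tests \<nu> f \<Theta>0 \<alpha>"
  then have \<psi>_test: "is_test \<nu> \<psi>" and \<psi>_level: "rej_prob \<nu> \<psi> (mixture \<Lambda> f) \<le> \<alpha>"
    using rej_prob_mixture_le[OF \<Lambda> _ _ \<alpha>] by (auto simp: level_tests_def)
  show "rej_prob \<nu> \<psi> g \<le> rej_prob \<nu> \<phi>0 g"
    unfolding \<phi>0_def by (rule np_test_most_powerful[OF g(1) h c \<kappa> size \<psi>_test \<psi>_level])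
  show "rej_prob \<nu> \<psi> g = rej_prob \<nu> \<phi>0 g \<Longrightarrow> AE y in \<nu>. \<psi> y = \<phi>0 y"
    unfolding \<phi>0_def by (rule np_test_unique_most_powerful[OF g(1) h c \<kappa> size AE_boundary \<psi>_test \<psi>_level])
qed

context
  fixes \<theta>s :: "'m::finite \<Rightarrow> 'p" and \<phi>ah :: "'y \<Rightarrow> real"
  assumes \<theta>s: "\<And>j. \<theta>s j \<in> \<Theta>" and \<phi>ah: "is_test \<nu> \<phi>ah"
begin

lemma gain_eq: "is_test \<nu> \<phi> \<Longrightarrow>
    gain \<nu> f \<phi>ah \<theta>s \<phi> j = rej_prob \<nu> \<phi> (f (\<theta>s j)) - rej_prob \<nu> \<phi>ah (f (\<theta>s j))"
  unfolding gain_def using \<phi>ah \<theta>s by (intro rej_prob_diff f_integrable)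

lemma gain_le_1: "is_test \<nu> \<phi> \<Longrightarrow> gain \<nu> f \<phi>ah \<theta>s \<phi> j \<le> 1"
  using gain_eq rej_prob_le_1[OF \<theta>s] rej_prob_nonneg[OF \<phi>ah] \<theta>s f_nonneg
  by (smt (verit))

lemma convex_gain_image: "convex ((\<lambda>\<phi>. \<chi> j. gain \<nu> f \<phi>ah \<theta>s \<phi> j) ` level_tests \<nu> f \<Theta>0 \<alpha>)"
proof (rule convexI)
  fix x y and u v :: real
  assume "x \<in> (\<lambda>\<phi>. \<chi> j. gain \<nu> f \<phi>ah \<theta>s \<phi> j) ` level_tests \<nu> f \<Theta>0 \<alpha>"
    and "y \<in> (\<lambda>\<phi>. \<chi> j. gain \<nu> f \<phi>ah \<theta>s \<phi> j) ` level_tests \<nu> f \<Theta>0 \<alpha>"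
    and uv: "0 \<le> u" "0 \<le> v" "u + v = 1"
  then obtain \<phi> \<psi> where \<phi>: "\<phi> \<in> level_tests \<nu> f \<Theta>0 \<alpha>" "x = (\<chi> j. gain \<nu> f \<phi>ah \<theta>s \<phi> j)"
    and \<psi>: "\<psi> \<in> level_tests \<nu> f \<Theta>0 \<alpha>" "y = (\<chi> j. gain \<nu> f \<phi>ah \<theta>s \<psi> j)"
    by blast
  define \<rho> where "\<rho> y = u * \<phi> y + v * \<psi> y" for y
  have tests: "is_test \<nu> \<phi>" "is_test \<nu> \<psi>" using \<phi>(1) \<psi>(1) by (auto simp: level_tests_def)
  have rej_\<rho>: "rej_prob \<nu> \<rho> d = u * rej_prob \<nu> \<phi> d + v * rej_prob \<nu> \<psi> d" if "integrable \<nu> d" for d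
    unfolding \<rho>_def using tests that by (rule rej_prob_convex_comb)
  have \<rho>: "is_test \<nu> \<rho>" unfolding \<rho>_def using tests uv by (rule is_test_convex_comb)
  moreover have "rej_prob \<nu> \<rho> (f \<theta>) \<le> \<alpha>" if "\<theta> \<in> \<Theta>0" for \<theta>
  proof -
    have "\<theta> \<in> \<Theta>" using that Theta0_subset by auto
    then have "rej_prob \<nu> \<rho> (f \<theta>) \<le> u * \<alpha> + v * \<alpha>"
      using that \<phi>(1) \<psi>(1) uv
      by (auto simp: rej_\<rho>[OF f_integrable] level_tests_def intro!: add_mono mult_left_mono)
    then show ?thesis using uv by (simp add: distrib_right[symmetric])
  qed
  ultimately have "\<rho> \<in> level_tests \<nu> f \<Theta>0 \<alpha>" by (simp add: level_tests_def)
  moreover have "gain \<nu> f \<phi>ah \<theta>s \<rho> j = u * gain \<nu> f \<phi>ah \<theta>s \<phi> j + v * gain \<nu> f \<phi>ah \<theta>s \<psi> j" for j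
  proof -
    have "rej_prob \<nu> \<phi>ah (f (\<theta>s j)) = (u + v) * rej_prob \<nu> \<phi>ah (f (\<theta>s j))" using uv by simp
    then show ?thesis
      unfolding gain_eq[OF \<rho>] gain_eq[OF tests(1)] gain_eq[OF tests(2)] rej_\<rho>[OF f_integrable[OF \<theta>s]]
      by (simp only: algebra_simps)
  qed
  ultimately show "u *\<^sub>R x + v *\<^sub>R y \<in> (\<lambda>\<phi>. \<chi> j. gain \<nu> f \<phi>ah \<theta>s \<phi> j) ` level_tests \<nu> f \<Theta>0 \<alpha>"
    unfolding \<phi>(2) \<psi>(2) by (intro image_eqI[of _ _ \<rho>]) (auto simp: vec_eq_iff)
qed

lemma mix_alt_integrable: "integrable \<nu> (mix_alt f \<theta>s \<omega>)"
  unfolding mix_alt_def[abs_def]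
  by (intro Bochner_Integration.integrable_sum integrable_mult_right f_integrable \<theta>s)

lemma mix_alt_nonneg: "\<omega> \<in> weight_simplex \<Longrightarrow> 0 \<le> mix_alt f \<theta>s \<omega> y"
  unfolding mix_alt_def weight_simplex_def using \<theta>s f_nonneg
  by (auto intro!: sum_nonneg mult_nonneg_nonneg)

lemma rej_prob_mix_alt:
  "is_test \<nu> \<phi> \<Longrightarrow> rej_prob \<nu> \<phi> (mix_alt f \<theta>s \<omega>) = (\<Sum>j\<in>UNIV. \<omega> j * rej_prob \<nu> \<phi> (f (\<theta>s j)))"
  unfolding rej_prob_def mix_alt_def using \<theta>s
  by (simp add: sum_distrib_left mult.left_commute integrable_test_mult f_integrable)

lemma wobj_eq: "is_test \<nu> \<phi> \<Longrightarrow>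
    wobj \<nu> f \<phi>ah \<theta>s \<omega> \<phi> = rej_prob \<nu> \<phi> (mix_alt f \<theta>s \<omega>) - rej_prob \<nu> \<phi>ah (mix_alt f \<theta>s \<omega>)"
  unfolding wobj_def using \<phi>ah
  by (simp add: gain_eq rej_prob_mix_alt right_diff_distrib sum_subtractf)

lemma np_test_unique_wobj_maximizer:
  assumes \<omega>: "\<omega> \<in> weight_simplex"
    and LF: "least_favorable \<nu> f \<Theta>0 \<alpha> (mix_alt f \<theta>s \<omega>) \<Lambda>"
    and c: "0 \<le> c" and \<kappa>: "0 \<le> \<kappa>" "\<kappa> \<le> 1" and \<alpha>: "0 \<le> \<alpha>"
    and size: "rej_prob \<nu> (np_test (mix_alt f \<theta>s \<omega>) (mixture \<Lambda> f) c \<kappa>) (mixture \<Lambda> f) = \<alpha>"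
    and boundary: "emeasure \<nu> {y. mix_alt f \<theta>s \<omega> y = c * mixture \<Lambda> f y} = 0"
  defines "\<phi>0 \<equiv> np_test (mix_alt f \<theta>s \<omega>) (mixture \<Lambda> f) c \<kappa>"
  shows "\<phi>0 \<in> level_tests \<nu> f \<Theta>0 \<alpha>
    \<and> (\<forall>\<psi> \<in> level_tests \<nu> f \<Theta>0 \<alpha>. wobj \<nu> f \<phi>ah \<theta>s \<omega> \<psi> \<le> wobj \<nu> f \<phi>ah \<theta>s \<omega> \<phi>0)
    \<and> (\<forall>\<psi> \<in> level_tests \<nu> f \<Theta>0 \<alpha>.
          wobj \<nu> f \<phi>ah \<theta>s \<omega> \<psi> = wobj \<nu> f \<phi>ah \<theta>s \<omega> \<phi>0 \<longrightarrow> (AE y in \<nu>. \<psi> y = \<phi>0 y))"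
proof -
  note np = np_test_optimal_if_least_favorable[OF mix_alt_integrable mix_alt_nonneg[OF \<omega>] LF c \<kappa> \<alpha>
      size boundary, folded \<phi>0_def]
  have "wobj \<nu> f \<phi>ah \<theta>s \<omega> \<psi> \<le> wobj \<nu> f \<phi>ah \<theta>s \<omega> \<phi>0 \<longleftrightarrow>
      rej_prob \<nu> \<psi> (mix_alt f \<theta>s \<omega>) \<le> rej_prob \<nu> \<phi>0 (mix_alt f \<theta>s \<omega>)"
    and "wobj \<nu> f \<phi>ah \<theta>s \<omega> \<psi> = wobj \<nu> f \<phi>ah \<theta>s \<omega> \<phi>0 \<longleftrightarrow>
      rej_prob \<nu> \<psi> (mix_alt f \<theta>s \<omega>) = rej_prob \<nu> \<phi>0 (mix_alt f \<theta>s \<omega>)"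
    if "\<psi> \<in> level_tests \<nu> f \<Theta>0 \<alpha>" for \<psi>
    using that np(1) by (auto simp: wobj_eq level_tests_def)
  then show ?thesis using np by auto
qed

lemma Phi_star_AE_eq_wobj_maximizer:
  assumes \<phi>: "\<phi> \<in> Phi_star \<nu> f \<Theta>0 \<alpha> \<phi>ah \<theta>s" and \<omega>: "\<omega> \<in> Delta_star \<nu> f \<Theta>0 \<alpha> \<phi>ah \<theta>s"
    and \<phi>0: "\<phi>0 \<in> level_tests \<nu> f \<Theta>0 \<alpha>"
      "\<forall>\<psi> \<in> level_tests \<nu> f \<Theta>0 \<alpha>. wobj \<nu> f \<phi>ah \<theta>s \<omega> \<psi> \<le> wobj \<nu> f \<phi>ah \<theta>s \<omega> \<phi>0"
      "\<forall>\<psi> \<in> level_tests \<nu> f \<Theta>0 \<alpha>.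
         wobj \<nu> f \<phi>ah \<theta>s \<omega> \<psi> = wobj \<nu> f \<phi>ah \<theta>s \<omega> \<phi>0 \<longrightarrow> (AE y in \<nu>. \<psi> y = \<phi>0 y)"
  shows "AE y in \<nu>. \<phi> y = \<phi>0 y"
proof -
  have \<phi>_level: "\<phi> \<in> level_tests \<nu> f \<Theta>0 \<alpha>" using \<phi> by (simp add: Phi_star_def)
  have "wobj \<nu> f \<phi>ah \<theta>s \<omega> \<phi>0 \<le> wobj \<nu> f \<phi>ah \<theta>s \<omega> \<phi>"
    unfolding wobj_def
  proof (rule maximin_maximizes_minimax_weighting[OF convex_gain_image])
    show "gain \<nu> f \<phi>ah \<theta>s \<psi> j \<le> 1" if "\<psi> \<in> level_tests \<nu> f \<Theta>0 \<alpha>" for \<psi> j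
      using that by (intro gain_le_1) (simp add: level_tests_def)
  qed (use \<phi> \<omega> \<phi>0(1) in \<open>auto simp: Phi_star_def Delta_star_def wobj_def\<close>)
  then show ?thesis
    using \<phi>0 \<phi>_level by (metis order.antisym)
qed

end

end

theorem theorem2:
  fixes \<nu> :: "'y::metric_space measure"
    and f :: "real^'k \<Rightarrow> 'y \<Rightarrow> real"
    and \<Theta> \<Theta>0 \<Theta>1 :: "(real^'k) set"
    and \<alpha> :: real
    and \<phi>ah :: "'y \<Rightarrow> real"
    and \<theta>s :: "'m::finite \<Rightarrow> real^'k"
    and \<Lambda>s :: "('m \<Rightarrow> real) \<Rightarrow> (real^'k) measure"
    and cv \<kappa> :: "('m \<Rightarrow> real) \<Rightarrow> real"
  assumes sets_nu: "sets \<nu> = sets borel"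
    and sigma_finite: "sigma_finite_measure \<nu>"
    and f_meas: "(\<lambda>(\<theta>, y). f \<theta> y) \<in> borel_measurable (borel \<Otimes>\<^sub>M borel)"
    and f_dens: "\<forall>\<theta>\<in>\<Theta>. (\<forall>y. 0 \<le> f \<theta> y) \<and> integrable \<nu> (f \<theta>) \<and> (LINT y|\<nu>. f \<theta> y) = 1"
    and Theta_sub: "\<Theta>0 \<subseteq> \<Theta>" "\<Theta>1 \<subseteq> \<Theta>"
    and disj: "\<Theta>0 \<inter> \<Theta>1 = {}"
    and borel_sets: "\<Theta>0 \<in> sets borel" "\<Theta>1 \<in> sets borel"
    and alpha: "0 < \<alpha>" "\<alpha> < 1"
    and thetas: "\<forall>j. \<theta>s j \<in> \<Theta>1"
    and ah: "\<phi>ah \<in> level_tests \<nu> f \<Theta>0 \<alpha>"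
    and lfd: "\<forall>\<omega> \<in> Delta_star \<nu> f \<Theta>0 \<alpha> \<phi>ah \<theta>s.
        least_favorable \<nu> f \<Theta>0 \<alpha> (mix_alt f \<theta>s \<omega>) (\<Lambda>s \<omega>)
        \<and> 0 \<le> cv \<omega> \<and> 0 \<le> \<kappa> \<omega> \<and> \<kappa> \<omega> \<le> 1
        \<and> rej_prob \<nu> (np_test (mix_alt f \<theta>s \<omega>) (mixture (\<Lambda>s \<omega>) f) (cv \<omega>) (\<kappa> \<omega>))
                   (mixture (\<Lambda>s \<omega>) f) = \<alpha>
        \<and> emeasure \<nu> {y. mix_alt f \<theta>s \<omega> y = cv \<omega> * mixture (\<Lambda>s \<omega>) f y} = 0"
  shows "(\<forall>\<omega> \<in> Delta_star \<nu> f \<Theta>0 \<alpha> \<phi>ah \<theta>s.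
            let \<phi>0 = np_test (mix_alt f \<theta>s \<omega>) (mixture (\<Lambda>s \<omega>) f) (cv \<omega>) (\<kappa> \<omega>) in
            \<phi>0 \<in> level_tests \<nu> f \<Theta>0 \<alpha>
            \<and> (\<forall>\<psi> \<in> level_tests \<nu> f \<Theta>0 \<alpha>. wobj \<nu> f \<phi>ah \<theta>s \<omega> \<psi> \<le> wobj \<nu> f \<phi>ah \<theta>s \<omega> \<phi>0)
            \<and> (\<forall>\<psi> \<in> level_tests \<nu> f \<Theta>0 \<alpha>.
                  wobj \<nu> f \<phi>ah \<theta>s \<omega> \<psi> = wobj \<nu> f \<phi>ah \<theta>s \<omega> \<phi>0 \<longrightarrow> (AE y in \<nu>. \<psi> y = \<phi>0 y)))
       \<and> (\<forall>\<phi>1 \<in> Phi_star \<nu> f \<Theta>0 \<alpha> \<phi>ah \<theta>s. \<forall>\<phi>2 \<in> Phi_star \<nu> f \<Theta>0 \<alpha> \<phi>ah \<theta>s.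
            \<forall>\<omega>1 \<in> Delta_star \<nu> f \<Theta>0 \<alpha> \<phi>ah \<theta>s. \<forall>\<omega>2 \<in> Delta_star \<nu> f \<Theta>0 \<alpha> \<phi>ah \<theta>s.
              AE y in \<nu>. \<phi>1 y = \<phi>2 y
                \<and> \<phi>2 y = np_test (mix_alt f \<theta>s \<omega>1) (mixture (\<Lambda>s \<omega>1) f) (cv \<omega>1) (\<kappa> \<omega>1) y
                \<and> np_test (mix_alt f \<theta>s \<omega>1) (mixture (\<Lambda>s \<omega>1) f) (cv \<omega>1) (\<kappa> \<omega>1) y
                  = np_test (mix_alt f \<theta>s \<omega>2) (mixture (\<Lambda>s \<omega>2) f) (cv \<omega>2) (\<kappa> \<omega>2) y)"
proof -
  interpret density_family \<nu> f \<Theta> \<Theta>0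
    by (rule density_family.intro[OF sets_nu sigma_finite f_meas f_dens Theta_sub(1) borel_sets(1)])
  have \<theta>s: "\<And>j. \<theta>s j \<in> \<Theta>" using thetas Theta_sub(2) by auto
  have \<phi>ah: "is_test \<nu> \<phi>ah" using ah by (simp add: level_tests_def)
  let ?np = "\<lambda>\<omega>. np_test (mix_alt f \<theta>s \<omega>) (mixture (\<Lambda>s \<omega>) f) (cv \<omega>) (\<kappa> \<omega>)"
  have optimal: "?np \<omega> \<in> level_tests \<nu> f \<Theta>0 \<alpha>
      \<and> (\<forall>\<psi> \<in> level_tests \<nu> f \<Theta>0 \<alpha>. wobj \<nu> f \<phi>ah \<theta>s \<omega> \<psi> \<le> wobj \<nu> f \<phi>ah \<theta>s \<omega> (?np \<omega>))
      \<and> (\<forall>\<psi> \<in> level_tests \<nu> f \<Theta>0 \<alpha>.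
            wobj \<nu> f \<phi>ah \<theta>s \<omega> \<psi> = wobj \<nu> f \<phi>ah \<theta>s \<omega> (?np \<omega>) \<longrightarrow> (AE y in \<nu>. \<psi> y = ?np \<omega> y))"
    if \<omega>: "\<omega> \<in> Delta_star \<nu> f \<Theta>0 \<alpha> \<phi>ah \<theta>s" for \<omega>
    using lfd[rule_format, OF \<omega>] \<omega> alpha(1)
    by (intro np_test_unique_wobj_maximizer[where \<theta>s=\<theta>s and \<phi>ah=\<phi>ah, OF \<theta>s \<phi>ah])
       (auto simp: Delta_star_def)
  have maximin_eq: "AE y in \<nu>. \<phi> y = ?np \<omega> y"
    if "\<phi> \<in> Phi_star \<nu> f \<Theta>0 \<alpha> \<phi>ah \<theta>s" "\<omega> \<in> Delta_star \<nu> f \<Theta>0 \<alpha> \<phi>ah \<theta>s" for \<phi> \<omega>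
    using Phi_star_AE_eq_wobj_maximizer[where \<theta>s=\<theta>s and \<phi>ah=\<phi>ah, OF \<theta>s \<phi>ah that] optimal[OF that(2)]
    by blast
  show ?thesis
  proof (intro conjI ballI)
    fix \<phi>1 \<phi>2 \<omega>1 \<omega>2
    assume \<phi>: "\<phi>1 \<in> Phi_star \<nu> f \<Theta>0 \<alpha> \<phi>ah \<theta>s" "\<phi>2 \<in> Phi_star \<nu> f \<Theta>0 \<alpha> \<phi>ah \<theta>s"
      and \<omega>: "\<omega>1 \<in> Delta_star \<nu> f \<Theta>0 \<alpha> \<phi>ah \<theta>s" "\<omega>2 \<in> Delta_star \<nu> f \<Theta>0 \<alpha> \<phi>ah \<theta>s"
    from maximin_eq[OF \<phi>(1) \<omega>(1)] maximin_eq[OF \<phi>(2) \<omega>(1)] maximin_eq[OF \<phi>(1) \<omega>(2)]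
    show "AE y in \<nu>. \<phi>1 y = \<phi>2 y \<and> \<phi>2 y = ?np \<omega>1 y \<and> ?np \<omega>1 y = ?np \<omega>2 y"
      by eventually_elim simp
  qed (use optimal in \<open>simp add: Let_def\<close>)
qed

end
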